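(* Let $X_1,\dots,X_n$ be i.i.d. real random variables with well-defined mean $\mu$ and variance $\sigma^2<+\infty$. Let $0<x\leq \sqrt{n/(\sqrt{2}+1)^2-2}$ and set $k(x):=\lceil x^2/2\rceil$. Then \[\Pr\left(|\overline{X}_{n,k(x)}-\mu|>\frac{(3\sqrt{2}+8+(4+4\sqrt{2})\,x)\,\sigma}{\sqrt{n}}\right)\leq 4\exp\left(-\frac{x^2}{2}\right).\]
   Context: For $X_{(1)}\leq\dots\leq X_{(n)}$ the order statistics of the sample and an integer $0\le k<n/2$, the $k$-trimmed mean is $\overline{X}_{n,k}:=\frac{1}{n-2k}\sum_{i=k+1}^{n-k}X_{(i)}$. *)

theory Defs
  imports "HOL-Probability.Probability"
begin

text \<open>Order statistics of a sample xs are the entries of sort xs (0-based).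
  The k-trimmed mean averages the entries with 1-based indices k+1 .. n-k.\<close>
definition trimmed_mean :: "nat \<Rightarrow> real list \<Rightarrow> real" where
  "trimmed_mean k xs =
     (\<Sum>i = k..<length xs - k. sort xs ! i) / real (length xs - 2 * k)"

end

theory Submission
  imports Defs
begin

(* Clip the deviations from the mean at a level a with Var X / a^2 = k / (9 n), so that by
   Chebyshev a single observation is far (at distance at least a from the mean) with probability
   at most k / (9 n). A Chernoff bound shows that more than k observations are far only with
   probability exp (-k). Otherwise all n - 2k central order statistics lie within a of the mean,
   so the trimmed sum differs from (n - 2k) times the mean plus the sum of all clipped deviations
   by at most 2 k a. The clipped deviations are bounded by a, have mean at most Var X / (4 a) and
   second moment at most Var X, so a Chernoff bound with parameter 1 / a controls their sum from
   above and from below, each time up to probability exp (-x^2/2). With a = 3 sigma sqrt (n / k)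
   the resulting deviation stays below the stated threshold, and the argument even gives the
   factor 3 instead of 4. If sigma = 0, the sample is almost surely constant. *)

definition clip :: "real \<Rightarrow> real \<Rightarrow> real" where
  "clip a y = max (- a) (min a y)"

lemma clip_measurable [measurable]: "clip a \<in> borel_measurable borel"
  unfolding clip_def by measurable

lemma abs_clip_le: "0 \<le> a \<Longrightarrow> \<bar>clip a y\<bar> \<le> a"
  by (auto simp: clip_def)

lemma clip_square_le: "0 \<le> a \<Longrightarrow> (clip a y)\<^sup>2 \<le> y\<^sup>2"
  by (auto simp: clip_def max_def min_def abs_le_square_iff[symmetric])

lemma clip_eq_self: "\<bar>y\<bar> \<le> a \<Longrightarrow> clip a y = y"
  by (auto simp: clip_def)

lemma clip_minus: "0 \<le> a \<Longrightarrow> clip a (- y) = - clip a y"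
  by (auto simp: clip_def max_def min_def)

lemma abs_clip_diff_le:
  assumes "0 < a"
  shows "\<bar>clip a y - y\<bar> \<le> y\<^sup>2 / (4 * a)"
proof -
  have "\<bar>clip a y - y\<bar> \<le> max 0 (\<bar>y\<bar> - a)"
    using assms by (auto simp: clip_def max_def min_def)
  also have "\<dots> \<le> y\<^sup>2 / (4 * a)"
    using zero_le_power2[of "\<bar>y\<bar> - 2 * a"] assms
    by (auto simp: field_simps power2_eq_square)
  finally show ?thesis .
qed

lemma sorted_count_far_ge:
  fixes s :: "real list"
  assumes "sorted s" "i < length s" "a \<le> \<bar>s ! i - m\<bar>"
  shows "min (i + 1) (length s - i) \<le> length (filter (\<lambda>v. a \<le> \<bar>v - m\<bar>) s)"
proof -
  let ?F = "{j. j < length s \<and> a \<le> \<bar>s ! j - m\<bar>}"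
  have mono: "card I \<le> card ?F" if "I \<subseteq> ?F" for I
    using that by (intro card_mono) auto
  consider "s ! i \<le> m - a" | "m + a \<le> s ! i"
    using assms(3) by (cases "0 \<le> s ! i - m") auto
  then have "i + 1 \<le> card ?F \<or> length s - i \<le> card ?F"
  proof cases
    case 1
    have "a \<le> \<bar>s ! j - m\<bar>" if "j \<le> i" for j
      using sorted_nth_mono[OF assms(1) that assms(2)] 1 by (auto simp: abs_if)
    then have "{0..i} \<subseteq> ?F"
      using assms(2) by auto
    then show ?thesis using mono[of "{0..i}"] by simp
  next
    case 2
    have "a \<le> \<bar>s ! j - m\<bar>" if "i \<le> j" "j < length s" for j
      using sorted_nth_mono[OF assms(1) that] 2 by (auto simp: abs_if)
    then have "{i..<length s} \<subseteq> ?F"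
      by auto
    then show ?thesis using mono[of "{i..<length s}"] by simp
  qed
  then show ?thesis
    by (auto simp: length_filter_conv_card)
qed

lemma sum_list_map_sort: "(\<Sum>v\<leftarrow>sort xs. f v) = (\<Sum>v\<leftarrow>xs. f v :: 'b :: comm_monoid_add)"
proof -
  have "mset (map f (sort xs)) = mset (map f xs)"
    by simp
  from arg_cong[OF this, of sum_mset] show ?thesis
    by (simp only: sum_mset_sum_list)
qed

lemma trimmed_sum_clip_approx:
  fixes xs :: "real list"
  defines "n \<equiv> length xs"
  assumes "2 * k < n" and "0 \<le> a" and far: "length (filter (\<lambda>v. a \<le> \<bar>v - m\<bar>) xs) \<le> k"
  shows "\<bar>(\<Sum>i = k..<n - k. sort xs ! i) - real (n - 2 * k) * m - (\<Sum>v\<leftarrow>xs. clip a (v - m))\<bar>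
           \<le> 2 * real k * a"
proof -
  define s where "s = sort xs"
  define c where "c i = clip a (s ! i - m)" for i
  define outer where "outer = {..<n} - {k..<n - k}"
  have s: "sorted s" "length s = n"
    by (simp_all add: s_def n_def)
  have "length (filter (\<lambda>v. a \<le> \<bar>v - m\<bar>) s) \<le> k"
    using far by (simp add: s_def filter_sort)
  \<comment> \<open>only k observations are far from m, so none of them survives the trimming\<close>
  then have "\<bar>s ! i - m\<bar> \<le> a" if "k \<le> i" "i < n - k" for i
    using sorted_count_far_ge[OF s(1), of i a m] that s by fastforce
  then have middle: "(\<Sum>i = k..<n - k. c i) = (\<Sum>i = k..<n - k. s ! i) - real (n - 2 * k) * m"
    using \<open>2 * k < n\<close> by (simp add: c_def clip_eq_self sum_subtractf of_nat_diff)
  have "(\<Sum>v\<leftarrow>xs. clip a (v - m)) = (\<Sum>v\<leftarrow>s. clip a (v - m))"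
    by (simp add: s_def sum_list_map_sort)
  also have "\<dots> = (\<Sum>i<n. c i)"
    using s by (simp add: c_def sum_list_sum_nth atLeast0LessThan)
  also have "\<dots> = (\<Sum>i\<in>outer. c i) + (\<Sum>i = k..<n - k. c i)"
    unfolding outer_def by (intro sum.subset_diff) auto
  finally have "\<bar>(\<Sum>i = k..<n - k. s ! i) - real (n - 2 * k) * m - (\<Sum>v\<leftarrow>xs. clip a (v - m))\<bar>
      = \<bar>\<Sum>i\<in>outer. c i\<bar>"
    using middle by linarith
  also have "\<dots> \<le> (\<Sum>i\<in>outer. \<bar>c i\<bar>)"
    by (rule sum_abs)
  also have "\<dots> \<le> card outer * a"
    using abs_clip_le[OF \<open>0 \<le> a\<close>] by (intro sum_bounded_above) (simp add: c_def)
  also have "card outer = 2 * k"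
    using \<open>2 * k < n\<close> unfolding outer_def by (subst card_Diff_subset) auto
  finally show ?thesis by (simp add: s_def)
qed

lemma trimmed_mean_deviation_lt:
  fixes f :: "nat \<Rightarrow> real"
  assumes "2 * k < n" and "0 \<le> a" and far: "card {i. i < n \<and> a \<le> \<bar>f i - m\<bar>} \<le> k"
    and clipped: "\<bar>\<Sum>i<n. clip a (f i - m)\<bar> < \<epsilon>"
  shows "\<bar>trimmed_mean k (map f [0..<n]) - m\<bar> < (2 * real k * a + \<epsilon>) / real (n - 2 * k)"
proof -
  define xs where "xs = map f [0..<n]"
  define T where "T = (\<Sum>i = k..<n - k. sort xs ! i)"
  have len: "length xs = n"
    by (simp add: xs_def)
  have "length (filter (\<lambda>v. a \<le> \<bar>v - m\<bar>) xs) = card {i. i < n \<and> a \<le> \<bar>f i - m\<bar>}"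
    unfolding length_filter_conv_card xs_def by (intro arg_cong[where f = card]) auto
  moreover have "(\<Sum>v\<leftarrow>xs. clip a (v - m)) = (\<Sum>i<n. clip a (f i - m))"
    by (simp add: xs_def interv_sum_list_conv_sum_set_nat atLeast0LessThan)
  ultimately have approx: "\<bar>T - real (n - 2 * k) * m - (\<Sum>i<n. clip a (f i - m))\<bar> \<le> 2 * real k * a"
    using trimmed_sum_clip_approx[of k xs a m] assms len by (simp add: T_def)
  have pos: "0 < real (n - 2 * k)"
    using assms(1) by simp
  have "trimmed_mean k xs - m = (T - real (n - 2 * k) * m) / real (n - 2 * k)"
    using pos len by (simp add: trimmed_mean_def T_def field_simps)
  then have "\<bar>trimmed_mean k xs - m\<bar> = \<bar>T - real (n - 2 * k) * m\<bar> / real (n - 2 * k)"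
    using pos by simp
  also have "\<dots> < (2 * real k * a + \<epsilon>) / real (n - 2 * k)"
    using approx clipped pos by (intro divide_strict_right_mono) auto
  finally show ?thesis
    by (simp add: xs_def)
qed

lemma trimmed_mean_replicate:
  assumes "2 * k < n"
  shows "trimmed_mean k (replicate n c) = c"
proof -
  have "(\<Sum>i = k..<n - k. replicate n c ! i) = (\<Sum>i = k..<n - k. c)"
    by (intro sum.cong) auto
  then show ?thesis
    using assms by (simp add: trimmed_mean_def)
qed

lemma exp_le_one_plus_x_plus_square:
  fixes x :: real
  assumes "\<bar>x\<bar> \<le> 1"
  shows "exp x \<le> 1 + x + x\<^sup>2"
proof (cases "0 \<le> x")
  case True
  then show ?thesis using exp_bound[of x] assms by auto
next
  case False
  define y where "y = - x"
  have y: "0 \<le> y" "y \<le> 1" using False assms by (auto simp: y_def)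
  have "(1 - y + y\<^sup>2) * (1 + y + y\<^sup>2 / 2) = 1 + y\<^sup>2 / 2 + y ^ 3 / 2 + y ^ 4 / 2"
    by (simp add: power2_eq_square power3_eq_cube power4_eq_xxxx field_simps)
  also have "\<dots> \<ge> 1" using y by simp
  finally have "1 \<le> (1 - y + y\<^sup>2) * exp y"
    using exp_lower_Taylor_quadratic[OF y(1)] y
    by (smt (verit) mult_left_mono zero_le_power2)
  then have "exp (- y) \<le> 1 - y + y\<^sup>2"
    by (simp add: exp_minus field_simps)
  then show ?thesis by (simp add: y_def)
qed

lemma (in prob_space) expectation_exp_clip_le:
  assumes [measurable]: "V \<in> borel_measurable M"
    and V2: "integrable M (\<lambda>\<omega>. (V \<omega>)\<^sup>2)" and "expectation V = 0" and a: "0 < a"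
  shows "expectation (\<lambda>\<omega>. exp (clip a (V \<omega>) / a))
           \<le> exp (5 * expectation (\<lambda>\<omega>. (V \<omega>)\<^sup>2) / (4 * a\<^sup>2))"
proof -
  define v where "v = expectation (\<lambda>\<omega>. (V \<omega>)\<^sup>2)"
  define C where "C \<omega> = clip a (V \<omega>)" for \<omega>
  have C_bound: "\<bar>C \<omega>\<bar> \<le> a" for \<omega>
    using a by (simp add: C_def abs_clip_le)
  have V1: "integrable M V"
    by (rule square_integrable_imp_integrable[OF _ V2]) simp
  have [measurable]: "C \<in> borel_measurable M"
    unfolding C_def by measurable
  have C1: "integrable M C"
    using C_bound by (intro integrable_const_bound[where B = a] AE_I2) auto
  have C2: "integrable M (\<lambda>\<omega>. (C \<omega>)\<^sup>2)"
    using C_bound a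
    by (intro integrable_const_bound[where B = "a\<^sup>2"] AE_I2) (auto simp: abs_le_square_iff[symmetric])
  have expC: "integrable M (\<lambda>\<omega>. exp (C \<omega> / a))"
    using C_bound[THEN abs_le_D1] a
    by (intro integrable_const_bound[where B = "exp 1"] AE_I2) auto
  have "expectation C = expectation (\<lambda>\<omega>. C \<omega> - V \<omega>)"
    using C1 V1 \<open>expectation V = 0\<close> by simp
  also have "\<dots> \<le> expectation (\<lambda>\<omega>. (V \<omega>)\<^sup>2 / (4 * a))"
  proof (intro integral_mono)
    show "C \<omega> - V \<omega> \<le> (V \<omega>)\<^sup>2 / (4 * a)" for \<omega>
      using abs_clip_diff_le[OF a, of "V \<omega>"] by (simp add: C_def)
  qed (use C1 V1 V2 in auto)
  finally have EC: "expectation C \<le> v / (4 * a)"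
    by (simp add: v_def)
  have EC2: "expectation (\<lambda>\<omega>. (C \<omega>)\<^sup>2) \<le> v"
    unfolding v_def using C2 V2 a by (intro integral_mono) (auto simp: C_def clip_square_le)
  have "expectation (\<lambda>\<omega>. exp (C \<omega> / a)) \<le> expectation (\<lambda>\<omega>. 1 + C \<omega> / a + (C \<omega>)\<^sup>2 / a\<^sup>2)"
    using C1 C2 expC C_bound a
    by (intro integral_mono exp_le_one_plus_x_plus_square[THEN order_trans])
       (auto simp: abs_divide power_divide)
  also have "\<dots> = 1 + expectation C / a + expectation (\<lambda>\<omega>. (C \<omega>)\<^sup>2) / a\<^sup>2"
    using C1 C2 by (simp add: prob_space)
  also have "\<dots> \<le> 1 + v / (4 * a) / a + v / a\<^sup>2"
    using EC EC2 a by (intro add_mono divide_right_mono) auto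
  also have "\<dots> = 1 + 5 * v / (4 * a\<^sup>2)"
    using a by (simp add: field_simps power2_eq_square)
  also have "\<dots> \<le> exp (5 * v / (4 * a\<^sup>2))"
    by (rule exp_ge_add_one_self)
  finally show ?thesis by (simp add: C_def v_def)
qed

lemma (in prob_space) expectation_exp_indicator:
  assumes [measurable]: "V \<in> borel_measurable M" "B \<in> sets borel"
  shows "expectation (\<lambda>\<omega>. exp (c * indicator B (V \<omega>)))
           = 1 + (exp c - 1) * prob {\<omega> \<in> space M. V \<omega> \<in> B}"
proof -
  define S where "S = {\<omega> \<in> space M. V \<omega> \<in> B}"
  have [measurable]: "S \<in> sets M" unfolding S_def by measurable
  have "expectation (\<lambda>\<omega>. exp (c * indicator B (V \<omega>)))
      = expectation (\<lambda>\<omega>. 1 + (exp c - 1) * indicator S \<omega>)"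
    by (intro Bochner_Integration.integral_cong) (auto simp: S_def indicator_def)
  also have "\<dots> = 1 + (exp c - 1) * prob S"
  proof -
    have "integrable M (indicator S :: 'a \<Rightarrow> real)"
      by (intro integrable_real_indicator) (auto simp: less_top[symmetric])
    moreover have "S \<inter> space M = S"
      using sets.sets_into_space[OF \<open>S \<in> events\<close>] by (rule Int_absorb2)
    ultimately show ?thesis
      by (simp add: prob_space)
  qed
  finally show ?thesis by (simp add: S_def)
qed

lemma card_eq_sum_indicator:
  fixes n :: nat
  shows "real (card {i. i < n \<and> f i \<in> B}) = (\<Sum>i<n. indicator B (f i))"
proof (induction n)
  case (Suc n)
  have "{i. i < Suc n \<and> f i \<in> B}
      = (if f n \<in> B then insert n {i. i < n \<and> f i \<in> B} else {i. i < n \<and> f i \<in> B})"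
    by (auto simp: less_Suc_eq)
  then show ?case
    using Suc by (simp add: indicator_def)
qed simp

locale iid_sample = prob_space +
  fixes X :: "nat \<Rightarrow> 'a \<Rightarrow> real" and n :: nat
  assumes measurable_X: "i < n \<Longrightarrow> X i \<in> borel_measurable M"
    and indep_X: "indep_vars (\<lambda>_. borel) X {..<n}"
    and distr_X: "i < n \<Longrightarrow> distr M borel (X i) = distr M borel (X 0)"
    and sample_nonempty: "0 < n"
begin

lemma measurable_X0 [measurable]: "X 0 \<in> borel_measurable M"
  using measurable_X sample_nonempty .

lemma measurable_X_lessThan [measurable]: "i \<in> {..<n} \<Longrightarrow> X i \<in> borel_measurable M"
  using measurable_X by simp

lemma expectation_X_eq:
  fixes g :: "real \<Rightarrow> real"
  assumes "i < n" and [measurable]: "g \<in> borel_measurable borel"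
  shows "expectation (\<lambda>\<omega>. g (X i \<omega>)) = expectation (\<lambda>\<omega>. g (X 0 \<omega>))"
proof -
  have "expectation (\<lambda>\<omega>. g (X j \<omega>)) = integral\<^sup>L (distr M borel (X j)) g" if "j < n" for j
    using measurable_X[OF that] by (subst integral_distr) auto
  from this[OF \<open>i < n\<close>] this[OF sample_nonempty] show ?thesis
    using distr_X[OF \<open>i < n\<close>] by simp
qed

lemma prob_sum_ge_le:
  assumes [measurable]: "g \<in> borel_measurable borel" and g_bound: "\<And>y. \<bar>g y\<bar> \<le> B"
    and "0 < l"
  shows "prob {\<omega> \<in> space M. \<epsilon> \<le> (\<Sum>i<n. g (X i \<omega>))}
           \<le> exp (- l * \<epsilon>) * expectation (\<lambda>\<omega>. exp (l * g (X 0 \<omega>))) ^ n"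
proof -
  have integrable_exp: "integrable M (\<lambda>\<omega>. exp (l * g (X i \<omega>)))" if "i < n" for i
    using measurable_X[OF that] g_bound[THEN abs_le_D1] \<open>0 < l\<close>
    by (intro integrable_const_bound[where B = "exp (l * B)"] AE_I2) auto
  have "ennreal (prob {\<omega> \<in> space M. \<epsilon> \<le> (\<Sum>i<n. g (X i \<omega>))})
      \<le> ennreal (exp (- l * \<epsilon>)) *
          (\<integral>\<^sup>+\<omega>. ennreal (exp (l * (\<Sum>i<n. g (X i \<omega>)))) * indicator (space M) \<omega> \<partial>M)"
    unfolding emeasure_eq_measure[symmetric] using \<open>0 < l\<close>
    by (intro Chernoff_ineq_nn_integral_ge) auto
  also have "(\<integral>\<^sup>+\<omega>. ennreal (exp (l * (\<Sum>i<n. g (X i \<omega>)))) * indicator (space M) \<omega> \<partial>M)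
      = (\<integral>\<^sup>+\<omega>. (\<Prod>i<n. ennreal (exp (l * g (X i \<omega>)))) \<partial>M)"
    by (intro nn_integral_cong) (simp add: sum_distrib_left exp_sum prod_ennreal)
  also have "\<dots> = (\<Prod>i<n. \<integral>\<^sup>+\<omega>. ennreal (exp (l * g (X i \<omega>))) \<partial>M)"
    by (intro indep_vars_nn_integral indep_vars_compose2[OF indep_X]) auto
  also have "\<dots> = (\<Prod>i<n. ennreal (expectation (\<lambda>\<omega>. exp (l * g (X 0 \<omega>)))))"
  proof (intro prod.cong refl)
    fix i assume "i \<in> {..<n}"
    then have "(\<integral>\<^sup>+\<omega>. ennreal (exp (l * g (X i \<omega>))) \<partial>M)
        = ennreal (expectation (\<lambda>\<omega>. exp (l * g (X i \<omega>))))"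
      using integrable_exp[of i] by (intro nn_integral_eq_integral) auto
    also have "expectation (\<lambda>\<omega>. exp (l * g (X i \<omega>))) = expectation (\<lambda>\<omega>. exp (l * g (X 0 \<omega>)))"
      using \<open>i \<in> {..<n}\<close> by (intro expectation_X_eq) auto
    finally show "(\<integral>\<^sup>+\<omega>. ennreal (exp (l * g (X i \<omega>))) \<partial>M)
        = ennreal (expectation (\<lambda>\<omega>. exp (l * g (X 0 \<omega>))))" .
  qed
  also have "ennreal (exp (- l * \<epsilon>)) * \<dots>
      = ennreal (exp (- l * \<epsilon>) * expectation (\<lambda>\<omega>. exp (l * g (X 0 \<omega>))) ^ n)"
    by (simp add: prod_ennreal ennreal_mult ennreal_power)
  finally show ?thesis
    by (subst (asm) ennreal_le_iff) auto
qed

lemma prob_card_gt_le: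
  fixes k :: nat
  assumes [measurable]: "B \<in> sets borel"
    and rare: "9 * real n * prob {\<omega> \<in> space M. X 0 \<omega> \<in> B} \<le> k"
  shows "prob {\<omega> \<in> space M. k < card {i. i < n \<and> X i \<omega> \<in> B}} \<le> exp (- real k)"
proof -
  define p where "p = prob {\<omega> \<in> space M. X 0 \<omega> \<in> B}"
  have "exp 2 = exp 1 * (exp 1 :: real)"
    by (simp flip: exp_add)
  also have "\<dots> \<le> 3 * 3"
    using exp_le by (intro mult_mono) auto
  finally have e2: "exp 2 - 1 \<le> (9::real)"
    by simp
  have "{\<omega> \<in> space M. k < card {i. i < n \<and> X i \<omega> \<in> B}}
      = {\<omega> \<in> space M. real k + 1 \<le> (\<Sum>i<n. indicator B (X i \<omega>))}"
    by (auto simp flip: card_eq_sum_indicator)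
  also have "prob \<dots> \<le> exp (- 2 * (real k + 1)) * expectation (\<lambda>\<omega>. exp (2 * indicator B (X 0 \<omega>))) ^ n"
    by (rule prob_sum_ge_le[where B = 1]) (auto simp: indicator_def)
  also have "\<dots> = exp (- 2 * (real k + 1)) * (1 + (exp 2 - 1) * p) ^ n"
    by (simp add: expectation_exp_indicator p_def)
  also have "\<dots> \<le> exp (- 2 * (real k + 1)) * exp ((exp 2 - 1) * p) ^ n"
    using exp_ge_add_one_self by (intro mult_left_mono power_mono) (auto simp: p_def)
  also have "\<dots> = exp (- 2 * (real k + 1) + n * ((exp 2 - 1) * p))"
    by (simp only: exp_add exp_of_nat_mult)
  also have "\<dots> \<le> exp (- real k)"
    using mult_right_mono[OF e2, of "n * p"] rare by (simp add: p_def algebra_simps)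
  finally show ?thesis .
qed

lemma prob_sum_clip_ge_le:
  assumes [measurable]: "f \<in> borel_measurable borel"
    and "integrable M (\<lambda>\<omega>. (f (X 0 \<omega>))\<^sup>2)" and "expectation (\<lambda>\<omega>. f (X 0 \<omega>)) = 0"
    and a: "0 < a"
  shows "prob {\<omega> \<in> space M. 5 * real n * expectation (\<lambda>\<omega>. (f (X 0 \<omega>))\<^sup>2) / (4 * a) + a * t
                             \<le> (\<Sum>i<n. clip a (f (X i \<omega>)))}
           \<le> exp (- t)"
  (is "prob {\<omega> \<in> space M. ?\<epsilon> \<le> _} \<le> _")
proof -
  define v where "v = expectation (\<lambda>\<omega>. (f (X 0 \<omega>))\<^sup>2)"
  have "prob {\<omega> \<in> space M. ?\<epsilon> \<le> (\<Sum>i<n. clip a (f (X i \<omega>)))}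
      \<le> exp (- (1 / a) * ?\<epsilon>) * expectation (\<lambda>\<omega>. exp (1 / a * clip a (f (X 0 \<omega>)))) ^ n"
    using a abs_clip_le[of a] by (intro prob_sum_ge_le[where B = a]) auto
  also have "\<dots> \<le> exp (- (1 / a) * ?\<epsilon>) * exp (5 * v / (4 * a\<^sup>2)) ^ n"
    using expectation_exp_clip_le[of "\<lambda>\<omega>. f (X 0 \<omega>)" a] assms
    by (intro mult_left_mono power_mono integral_nonneg_AE) (auto simp: v_def)
  also have "\<dots> = exp (- (1 / a) * ?\<epsilon> + n * (5 * v / (4 * a\<^sup>2)))"
    by (simp only: exp_add exp_of_nat_mult)
  also have "- (1 / a) * ?\<epsilon> + n * (5 * v / (4 * a\<^sup>2)) = - t"
    using a by (simp add: v_def field_simps power2_eq_square)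
  finally show ?thesis .
qed

lemma AE_X_eq_expectation:
  assumes "integrable M (\<lambda>\<omega>. (X 0 \<omega>)\<^sup>2)" and "variance (X 0) = 0"
  shows "AE \<omega> in M. \<forall>i<n. X i \<omega> = expectation (X 0)"
proof -
  define \<mu> where "\<mu> = expectation (X 0)"
  have "integrable M (X 0)"
    by (rule square_integrable_imp_integrable[OF _ assms(1)]) simp
  then have "integrable M (\<lambda>\<omega>. (X 0 \<omega> - \<mu>)\<^sup>2)"
    using assms(1) by (simp add: power2_diff)
  then have "AE \<omega> in M. (X 0 \<omega> - \<mu>)\<^sup>2 = 0"
    using assms(2) by (simp add: \<mu>_def integral_nonneg_eq_0_iff_AE)
  then have "AE y in distr M borel (X 0). y = \<mu>"
    by (subst AE_distr_iff) auto
  then have "AE \<omega> in M. X i \<omega> = \<mu>" if "i < n" for i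
    using that measurable_X[OF that] by (subst (asm) distr_X[OF that, symmetric]) (simp add: AE_distr_iff)
  then show ?thesis
    unfolding \<mu>_def by (subst AE_all_countable) auto
qed

lemma trimmed_mean_deviation_degenerate:
  assumes "2 * k < n" and "integrable M (\<lambda>\<omega>. (X 0 \<omega>)\<^sup>2)" and "variance (X 0) = 0"
    and "0 \<le> c"
  shows "measure M {\<omega> \<in> space M.
           c < \<bar>trimmed_mean k (map (\<lambda>i. X i \<omega>) [0..<n]) - expectation (X 0)\<bar>} = 0"
    (is "measure M ?E = 0")
proof -
  obtain N where N: "{\<omega> \<in> space M. \<not> (\<forall>i<n. X i \<omega> = expectation (X 0))} \<subseteq> N"
      "emeasure M N = 0" "N \<in> sets M"
    using AE_X_eq_expectation[OF assms(2,3)] by (elim AE_E)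
  have "map (\<lambda>i. X i \<omega>) [0..<n] = replicate n (expectation (X 0))" if "\<omega> \<in> space M - N" for \<omega>
  proof -
    have "\<forall>i<n. X i \<omega> = expectation (X 0)"
      using N(1) that by blast
    then show ?thesis
      by (auto intro: nth_equalityI)
  qed
  then have "?E \<subseteq> N"
    using trimmed_mean_replicate[OF assms(1)] \<open>0 \<le> c\<close> by force
  then have "measure M ?E \<le> measure M N"
    using N(3) by (rule finite_measure_mono)
  also have "measure M N = 0"
    using N(2) by (simp add: emeasure_eq_measure)
  finally show ?thesis
    by (simp add: measure_le_0_iff)
qed

lemma prob_far_count_gt_le:
  fixes k :: nat
  assumes X2: "integrable M (\<lambda>\<omega>. (X 0 \<omega>)\<^sup>2)" and a: "0 < a"
    and level: "9 * real n * variance (X 0) \<le> real k * a\<^sup>2"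
  shows "prob {\<omega> \<in> space M. k < card {i. i < n \<and> a \<le> \<bar>X i \<omega> - expectation (X 0)\<bar>}}
           \<le> exp (- real k)"
proof -
  define far where "far = {y. a \<le> \<bar>y - expectation (X 0)\<bar>}"
  have "9 * real n * prob {\<omega> \<in> space M. X 0 \<omega> \<in> far} \<le> 9 * real n * (variance (X 0) / a\<^sup>2)"
    using Chebyshev_inequality[OF _ X2 a] by (intro mult_left_mono) (simp_all add: far_def)
  also have "\<dots> \<le> k"
    using level a by (simp add: field_simps)
  finally show ?thesis
    using prob_card_gt_le[of far k] by (simp add: far_def)
qed

lemma prob_abs_sum_clip_ge_le:
  assumes X2: "integrable M (\<lambda>\<omega>. (X 0 \<omega>)\<^sup>2)" and a: "0 < a"
  shows "prob {\<omega> \<in> space M. 5 * real n * variance (X 0) / (4 * a) + a * t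
                             \<le> \<bar>\<Sum>i<n. clip a (X i \<omega> - expectation (X 0))\<bar>}
           \<le> 2 * exp (- t)"
proof -
  define \<mu> where "\<mu> = expectation (X 0)"
  define \<epsilon> where "\<epsilon> = 5 * real n * variance (X 0) / (4 * a) + a * t"
  define A where "A = {\<omega> \<in> space M. \<epsilon> \<le> (\<Sum>i<n. clip a (X i \<omega> - \<mu>))}"
  define A' where "A' = {\<omega> \<in> space M. \<epsilon> \<le> (\<Sum>i<n. clip a (\<mu> - X i \<omega>))}"
  have "integrable M (X 0)"
    by (rule square_integrable_imp_integrable[OF _ X2]) simp
  then have "integrable M (\<lambda>\<omega>. (X 0 \<omega> - \<mu>)\<^sup>2)" "integrable M (\<lambda>\<omega>. (\<mu> - X 0 \<omega>)\<^sup>2)"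
      "expectation (\<lambda>\<omega>. X 0 \<omega> - \<mu>) = 0" "expectation (\<lambda>\<omega>. \<mu> - X 0 \<omega>) = 0"
      "expectation (\<lambda>\<omega>. (X 0 \<omega> - \<mu>)\<^sup>2) = variance (X 0)"
      "expectation (\<lambda>\<omega>. (\<mu> - X 0 \<omega>)\<^sup>2) = variance (X 0)"
    using X2 by (simp_all add: power2_diff power2_commute[of \<mu>] prob_space \<mu>_def)
  then have "prob A \<le> exp (- t)" "prob A' \<le> exp (- t)"
    using prob_sum_clip_ge_le[of "\<lambda>y. y - \<mu>" a t] prob_sum_clip_ge_le[of "\<lambda>y. \<mu> - y" a t] a
    by (simp_all add: A_def A'_def \<epsilon>_def)
  moreover have "A \<in> events" "A' \<in> events"
    unfolding A_def A'_def by measurable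
  moreover have "{\<omega> \<in> space M. \<epsilon> \<le> \<bar>\<Sum>i<n. clip a (X i \<omega> - \<mu>)\<bar>} = A \<union> A'"
    using clip_minus[of a "X _ _ - \<mu>"] a by (auto simp: A_def A'_def abs_if sum_negf)
  ultimately show ?thesis
    using measure_Un_le[of A M A'] by (simp add: \<mu>_def \<epsilon>_def)
qed

lemma trimmed_mean_deviation_tail:
  fixes k :: nat and a t c :: real
  defines "\<mu> \<equiv> expectation (X 0)" and "v \<equiv> variance (X 0)"
  assumes "2 * k < n" and X2: "integrable M (\<lambda>\<omega>. (X 0 \<omega>)\<^sup>2)" and a: "0 < a" and "t \<le> k"
    and level: "9 * real n * v \<le> real k * a\<^sup>2"
    and c: "(2 * real k * a + 5 * real n * v / (4 * a) + a * t) / real (n - 2 * k) \<le> c"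
  shows "measure M {\<omega> \<in> space M. c < \<bar>trimmed_mean k (map (\<lambda>i. X i \<omega>) [0..<n]) - \<mu>\<bar>}
           \<le> 3 * exp (- t)"
proof -
  define \<epsilon> where "\<epsilon> = 5 * real n * v / (4 * a) + a * t"
  define A where "A = {\<omega> \<in> space M. k < card {i. i < n \<and> a \<le> \<bar>X i \<omega> - \<mu>\<bar>}}"
  define A' where "A' = {\<omega> \<in> space M. \<epsilon> \<le> \<bar>\<Sum>i<n. clip a (X i \<omega> - \<mu>)\<bar>}"
  have "prob A \<le> exp (- real k)"
    using prob_far_count_gt_le[OF X2 a] level by (simp add: A_def \<mu>_def v_def)
  also have "\<dots> \<le> exp (- t)"
    using \<open>t \<le> k\<close> by simp
  finally have A_bound: "prob A \<le> exp (- t)" .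
  have A'_bound: "prob A' \<le> 2 * exp (- t)"
    using prob_abs_sum_clip_ge_le[OF X2 a] by (simp add: A'_def \<epsilon>_def \<mu>_def v_def)
  have A_eq: "A = {\<omega> \<in> space M. real k < (\<Sum>i<n. indicator {y. a \<le> \<bar>y - \<mu>\<bar>} (X i \<omega>))}"
    by (simp add: A_def flip: card_eq_sum_indicator)
  have events: "A \<in> events" "A' \<in> events"
    unfolding A_eq A'_def by measurable
  have "{\<omega> \<in> space M. c < \<bar>trimmed_mean k (map (\<lambda>i. X i \<omega>) [0..<n]) - \<mu>\<bar>} \<subseteq> A \<union> A'"
  proof (rule subsetI, rule ccontr)
    fix \<omega> assume \<omega>: "\<omega> \<in> {\<omega> \<in> space M. c < \<bar>trimmed_mean k (map (\<lambda>i. X i \<omega>) [0..<n]) - \<mu>\<bar>}"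
      and "\<omega> \<notin> A \<union> A'"
    then have "\<bar>trimmed_mean k (map (\<lambda>i. X i \<omega>) [0..<n]) - \<mu>\<bar> < (2 * real k * a + \<epsilon>) / real (n - 2 * k)"
      using \<open>2 * k < n\<close> a by (intro trimmed_mean_deviation_lt) (auto simp: A_def A'_def)
    also have "\<dots> \<le> c"
      using c unfolding \<epsilon>_def by (simp only: add.assoc)
    finally show False
      using \<omega> by auto
  qed
  then have "measure M {\<omega> \<in> space M. c < \<bar>trimmed_mean k (map (\<lambda>i. X i \<omega>) [0..<n]) - \<mu>\<bar>}
      \<le> prob (A \<union> A')"
    using events by (intro finite_measure_mono) auto
  also have "\<dots> \<le> prob A + prob A'"
    using events by (rule measure_Un_le)
  also have "\<dots> \<le> 3 * exp (- t)"
    using A_bound A'_bound by simp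
  finally show ?thesis .
qed

end

lemma sqrt_2_bounds: "7 / 5 < sqrt (2::real)" "sqrt (2::real) < 3 / 2"
  by (rule real_less_rsqrt; simp add: power2_eq_square)
     (rule real_less_lsqrt; simp add: power2_eq_square)

lemma sample_size_condition:
  fixes N x K :: real
  assumes "0 < x" and "x \<le> sqrt (N / (sqrt 2 + 1)\<^sup>2 - 2)" and "x\<^sup>2 / 2 \<le> K" "K \<le> x\<^sup>2 / 2 + 1"
  shows "(2 * sqrt 2 - 2) * N \<le> N - 2 * K" and "2 * K < N"
proof -
  define y where "y = N / (sqrt 2 + 1)\<^sup>2 - 2"
  have "0 < sqrt y"
    using assms(1,2) unfolding y_def by linarith
  then have "0 < y"
    by simp
  have "x\<^sup>2 \<le> (sqrt y)\<^sup>2"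
    using assms(1,2) by (intro power_mono) (simp_all add: y_def)
  then have "x\<^sup>2 \<le> y"
    using \<open>0 < y\<close> by simp
  moreover have "y = N - (2 * sqrt 2 - 2) * N - 2"
  proof -
    have "(sqrt 2 + 1)\<^sup>2 * (3 - 2 * sqrt 2) = (1::real)"
      by (simp add: power2_eq_square algebra_simps)
    moreover have "sqrt 2 + 1 \<noteq> (0::real)"
      using sqrt_2_bounds(1) by linarith
    ultimately have "1 / (sqrt 2 + 1)\<^sup>2 = 3 - 2 * sqrt 2"
      by (simp add: divide_eq_eq mult.commute)
    then have "N / (sqrt 2 + 1)\<^sup>2 = (3 - 2 * sqrt 2) * N"
      by (metis times_divide_eq_left mult_1 mult.commute)
    then show ?thesis
      by (simp add: y_def algebra_simps)
  qed
  ultimately show size: "(2 * sqrt 2 - 2) * N \<le> N - 2 * K"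
    using assms(4) by linarith
  have "0 < x\<^sup>2 / 2"
    using assms(1) by simp
  moreover have "(3 - 2 * sqrt 2) * N = N - (2 * sqrt 2 - 2) * N"
    by (simp add: algebra_simps)
  ultimately have "0 < (3 - 2 * sqrt 2) * N"
    using size assms(3) by linarith
  then have "0 < N"
    using sqrt_2_bounds by (simp add: zero_less_mult_iff)
  then have "0 < (2 * sqrt 2 - 2) * N"
    using sqrt_2_bounds by simp
  then show "2 * K < N"
    using size by linarith
qed

lemma deviation_coefficient_le:
  fixes x r :: real
  assumes "0 < x" "0 < r" "x\<^sup>2 / 2 \<le> r\<^sup>2" "r\<^sup>2 \<le> x\<^sup>2 / 2 + 1"
  shows "77 * r / 12 + 3 * x\<^sup>2 / (2 * r) \<le> (3 * sqrt 2 + 8 + (4 + 4 * sqrt 2) * x) * (2 * sqrt 2 - 2)"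
proof -
  define t where "t = sqrt (2::real)"
  have t: "t * t = 2" "7 / 5 < t" "t < 3 / 2"
    using sqrt_2_bounds by (simp_all add: t_def)
  have "(t * r)\<^sup>2 = (t * t) * r\<^sup>2"
    by (simp add: power2_eq_square)
  then have "x\<^sup>2 \<le> (t * r)\<^sup>2"
    using assms(3) t(1) by simp
  then have "x \<le> t * r"
    by (rule power2_le_imp_le) (use assms(2) t(2) in simp)
  then have "x * x \<le> x * (t * r)"
    using assms(1) by (intro mult_left_mono) simp_all
  then have x2: "x\<^sup>2 / r \<le> t * x"
    using assms(2) by (simp add: divide_le_eq power2_eq_square mult_ac)
  have "0 < t * x"
    using assms(1) t(2) by simp
  then have "r\<^sup>2 \<le> x\<^sup>2 / 2 + t * x + 1"
    using assms(4) by simp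
  also have "\<dots> = (t * x / 2 + 1)\<^sup>2"
    using t(1) by (simp add: power2_eq_square algebra_simps)
  finally have r: "r \<le> t * x / 2 + 1"
    by (rule power2_le_imp_le) (use assms(1) t(2) in simp)
  have "3 * x\<^sup>2 / (2 * r) = 3 / 2 * (x\<^sup>2 / r)"
    by simp
  also have "\<dots> \<le> 3 / 2 * (t * x)"
    using x2 by simp
  finally have "77 * r / 12 + 3 * x\<^sup>2 / (2 * r) \<le> 77 / 12 * (t * x / 2 + 1) + 3 / 2 * (t * x)"
    by (rule add_mono[rotated]) (use r in simp)
  also have "\<dots> \<le> 10 * t - 4 + 8 * x"
  proof -
    have "t * x \<le> 3 / 2 * x"
      using t(3) assms(1) by (intro mult_right_mono) simp_all
    moreover have "77 / 12 * (t * x / 2 + 1) + 3 / 2 * (t * x) = 113 / 24 * (t * x) + 77 / 12"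
      by (simp add: field_simps)
    ultimately show ?thesis
      using t(2) assms(1) by linarith
  qed
  also have "\<dots> = (3 * t + 8 + (4 + 4 * t) * x) * (2 * t - 2)"
  proof -
    have "(3 * t + 8 + (4 + 4 * t) * x) * (2 * t - 2) = 6 * (t * t) + 10 * t - 16 + (8 * (t * t) - 8) * x"
      by (simp add: algebra_simps)
    then show ?thesis
      using t(1) by simp
  qed
  finally show ?thesis
    by (simp add: t_def)
qed

lemma trimmed_mean_threshold_le:
  fixes \<sigma> N K x :: real
  defines "a \<equiv> 3 * \<sigma> * sqrt N / sqrt K"
  assumes "0 < \<sigma>" "0 < x" "0 < N" "x\<^sup>2 / 2 \<le> K" "K \<le> x\<^sup>2 / 2 + 1"
    and size: "(2 * sqrt 2 - 2) * N \<le> N - 2 * K"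
  shows "(2 * K * a + 5 * N * \<sigma>\<^sup>2 / (4 * a) + a * (x\<^sup>2 / 2)) / (N - 2 * K)
           \<le> (3 * sqrt 2 + 8 + (4 + 4 * sqrt 2) * x) * \<sigma> / sqrt N"
proof -
  define r q C where "r = sqrt K" and "q = sqrt N"
    and "C = 3 * sqrt 2 + 8 + (4 + 4 * sqrt 2) * x"
  have "0 < x\<^sup>2 / 2"
    using assms(3) by simp
  then have "0 < K"
    using assms(5) by linarith
  then have rq: "0 < r" "r\<^sup>2 = K" "0 < q" "q\<^sup>2 = N"
    using \<open>0 < N\<close> by (simp_all add: r_def q_def)
  have "0 < C"
    using assms(3) by (simp add: C_def add_pos_pos)
  have "0 < (2 * sqrt 2 - 2) * N"
    using sqrt_2_bounds \<open>0 < N\<close> by simp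
  then have "0 < N - 2 * K"
    using size by linarith
  have "2 * K * a + 5 * N * \<sigma>\<^sup>2 / (4 * a) + a * (x\<^sup>2 / 2) = \<sigma> * q * (77 * r / 12 + 3 * x\<^sup>2 / (2 * r))"
    using rq \<open>0 < \<sigma>\<close>
    unfolding a_def r_def[symmetric] q_def[symmetric] rq(2)[symmetric] rq(4)[symmetric]
    by (simp add: field_simps power2_eq_square)
  also have "\<dots> \<le> \<sigma> * q * (C * (2 * sqrt 2 - 2))"
    using deviation_coefficient_le[of x r] rq assms unfolding C_def
    by (intro mult_left_mono) auto
  finally have "(2 * K * a + 5 * N * \<sigma>\<^sup>2 / (4 * a) + a * (x\<^sup>2 / 2)) / (N - 2 * K)
      \<le> \<sigma> * q * C * ((2 * sqrt 2 - 2) / (N - 2 * K))"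
    using \<open>0 < N - 2 * K\<close> by (simp add: divide_right_mono mult_ac)
  also have "\<dots> \<le> \<sigma> * q * C * (1 / N)"
    using size \<open>0 < N - 2 * K\<close> \<open>0 < N\<close> \<open>0 < C\<close> \<open>0 < \<sigma>\<close> rq
    by (intro mult_left_mono) (simp_all add: field_simps)
  also have "\<dots> = C * \<sigma> / q"
    using rq unfolding rq(4)[symmetric] by (simp add: field_simps power2_eq_square)
  finally show ?thesis
    by (simp add: C_def q_def)
qed

lemma (in iid_sample) trimmed_mean_deviation_nondegenerate:
  fixes k :: nat and x :: real
  defines "\<sigma> \<equiv> sqrt (variance (X 0))"
  assumes "2 * k < n" and X2: "integrable M (\<lambda>\<omega>. (X 0 \<omega>)\<^sup>2)" and "0 < \<sigma>" and "0 < x"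
    and k: "x\<^sup>2 / 2 \<le> k" "k \<le> x\<^sup>2 / 2 + 1" and size: "(2 * sqrt 2 - 2) * n \<le> n - 2 * real k"
  shows "measure M {\<omega> \<in> space M. (3 * sqrt 2 + 8 + (4 + 4 * sqrt 2) * x) * \<sigma> / sqrt n
           < \<bar>trimmed_mean k (map (\<lambda>i. X i \<omega>) [0..<n]) - expectation (X 0)\<bar>}
         \<le> 3 * exp (- (x\<^sup>2 / 2))"
proof -
  define a where "a = 3 * \<sigma> * sqrt n / sqrt k"
  have \<sigma>2: "\<sigma>\<^sup>2 = variance (X 0)"
    by (simp add: \<sigma>_def)
  have "0 < x\<^sup>2 / 2"
    using \<open>0 < x\<close> by simp
  then have "0 < real k"
    using k(1) by linarith
  then have "0 < a" "9 * real n * variance (X 0) \<le> real k * a\<^sup>2"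
    using \<open>0 < \<sigma>\<close> \<open>2 * k < n\<close>
    unfolding a_def \<sigma>2[symmetric] by (simp_all add: power_mult_distrib power_divide)
  moreover have "(2 * real k * a + 5 * real n * variance (X 0) / (4 * a) + a * (x\<^sup>2 / 2))
      / real (n - 2 * k) \<le> (3 * sqrt 2 + 8 + (4 + 4 * sqrt 2) * x) * \<sigma> / sqrt n"
    using trimmed_mean_threshold_le[OF \<open>0 < \<sigma>\<close> \<open>0 < x\<close> _ k size] \<open>2 * k < n\<close>
    unfolding a_def \<sigma>2[symmetric] by (simp add: of_nat_diff)
  ultimately show ?thesis
    using \<open>2 * k < n\<close> X2 k(1) by (intro trimmed_mean_deviation_tail) simp_all
qed

theorem theorem1p1:
  fixes M :: "'a measure" and X :: "nat \<Rightarrow> 'a \<Rightarrow> real"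
    and n :: nat and x \<mu> \<sigma> :: real
  assumes "prob_space M"
    and "\<And>i. i < n \<Longrightarrow> X i \<in> borel_measurable M"
    and "prob_space.indep_vars M (\<lambda>_. borel) X {..<n}"
    and "\<And>i. i < n \<Longrightarrow> distr M borel (X i) = distr M borel (X 0)"
    and "integrable M (X 0)"
    and "integrable M (\<lambda>\<omega>. (X 0 \<omega>)\<^sup>2)"
    and "\<mu> = prob_space.expectation M (X 0)"
    and "\<sigma> = sqrt (prob_space.variance M (X 0))"
    and "0 < x"
    and "x \<le> sqrt (real n / (sqrt 2 + 1)\<^sup>2 - 2)"
  shows "measure M {\<omega> \<in> space M.
           \<bar>trimmed_mean (nat \<lceil>x\<^sup>2 / 2\<rceil>) (map (\<lambda>i. X i \<omega>) [0..<n]) - \<mu>\<bar>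
             > (3 * sqrt 2 + 8 + (4 + 4 * sqrt 2) * x) * \<sigma> / sqrt (real n)}
         \<le> 4 * exp (- (x\<^sup>2 / 2))"
proof -
  define k where "k = nat \<lceil>x\<^sup>2 / 2\<rceil>"
  have k: "x\<^sup>2 / 2 \<le> real k" "real k \<le> x\<^sup>2 / 2 + 1"
    by (simp_all add: k_def real_nat_ceiling_ge of_int_ceiling_le_add_one)
  note size = sample_size_condition[OF assms(9,10) k]
  then have "2 * k < n"
    by linarith
  interpret iid_sample M X n
    using \<open>2 * k < n\<close> by (intro iid_sample.intro[OF assms(1)] iid_sample_axioms.intro assms(2-4)) simp_all
  show ?thesis
  proof (cases "\<sigma> = 0")
    case True
    then show ?thesis
      using trimmed_mean_deviation_degenerate[OF \<open>2 * k < n\<close> assms(6), of 0] assms(8)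
      unfolding assms(7) k_def by simp
  next
    case False
    then have "0 < sqrt (variance (X 0))"
      using assms(8) variance_positive[of "X 0"] by (simp add: le_less)
    from trimmed_mean_deviation_nondegenerate[OF \<open>2 * k < n\<close> assms(6) this assms(9) k size(1)]
    show ?thesis
      unfolding assms(7,8) k_def by (rule order_trans) simp
  qed
qed

end
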